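(* Let $(X,d)$ be a metric space with bounded geometry, fix $x\in X$, and write $V_\delta=V_\delta^x$. (i) If $\lim_{l\to\infty}\frac1l\log V_\delta(l)=0$ for every $\delta>0$, then $h_\infty(X)=0$. (ii) If there exists $\delta>0$ with $\limsup_{l\to\infty}\frac1l\log V_\delta(l)>0$, then $h_\infty(X)=\infty$.
   Context: Bounded geometry: for every $r>0$ there is $C(r)\in\mathbb N$ bounding the cardinality of every closed ball of radius $r$. For $\delta>0$ a $\delta$-path is a sequence $(x_0,\dots,x_n)$ with $d(x_{i-1},x_i)\le\delta$; $[x]_\delta$ is the set of points connected to $x$ by a $\delta$-path; $B_\delta(x_0,n)=\{x_n:\exists\ \delta\text{-path }(x_0,\dots,x_n)\}$. Define $V_\delta^x(l)=\sup_{x_0\in[x]_\delta}|B_\delta(x_0,l)|$. Coarse entropy $h_\infty(X)=\lim_{\delta\to\infty}\lim_{R\to\infty}\limsup_{n\to\infty}\frac1n\log s(n,R,\delta,x_0)$, where $s(n,R,\delta,x_0)$ is the supremum of cardinalities of $R$-separated sets of $\delta$-paths of length $n$ starting at $x_0$, paths compared by $\max_i d(x_i,y_i)$. *)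

theory Defs
  imports "HOL-Analysis.Analysis"
begin

text \<open>The metric space X is the whole type 'a (class metric_space).\<close>

definition bounded_geometry :: "'a::metric_space itself \<Rightarrow> bool" where
  "bounded_geometry _ \<longleftrightarrow>
     (\<forall>r>0. \<exists>C::nat. \<forall>y::'a. finite (cball y r) \<and> card (cball y r) \<le> C)"

text \<open>A delta-path (x_0,...,x_n) is a nonempty list; its length n is length xs - 1.\<close>
definition dpath :: "real \<Rightarrow> 'a::metric_space list \<Rightarrow> bool" where
  "dpath \<delta> xs \<longleftrightarrow> xs \<noteq> [] \<and> (\<forall>i. Suc i < length xs \<longrightarrow> dist (xs ! i) (xs ! Suc i) \<le> \<delta>)"

definition dcomp :: "real \<Rightarrow> 'a::metric_space \<Rightarrow> 'a set" where
  "dcomp \<delta> x = {y. \<exists>xs. dpath \<delta> xs \<and> hd xs = x \<and> last xs = y}"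

definition dpaths :: "real \<Rightarrow> 'a::metric_space \<Rightarrow> nat \<Rightarrow> 'a list set" where
  "dpaths \<delta> x0 n = {xs. dpath \<delta> xs \<and> length xs = Suc n \<and> hd xs = x0}"

definition dball :: "real \<Rightarrow> 'a::metric_space \<Rightarrow> nat \<Rightarrow> 'a set" where
  "dball \<delta> x0 n = last ` dpaths \<delta> x0 n"

definition Vol :: "'a::metric_space \<Rightarrow> real \<Rightarrow> nat \<Rightarrow> ereal" where
  "Vol x \<delta> l = (SUP x0\<in>dcomp \<delta> x. ereal (real (card (dball \<delta> x0 l))))"

definition pdist :: "'a::metric_space list \<Rightarrow> 'a list \<Rightarrow> real" where
  "pdist xs ys = Max {dist (xs ! i) (ys ! i) | i. i < length xs}"

definition separated :: "real \<Rightarrow> 'a::metric_space list set \<Rightarrow> bool" where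
  "separated R P \<longleftrightarrow> (\<forall>p\<in>P. \<forall>q\<in>P. p \<noteq> q \<longrightarrow> pdist p q > R)"

definition sepnum :: "nat \<Rightarrow> real \<Rightarrow> real \<Rightarrow> 'a::metric_space \<Rightarrow> ereal" where
  "sepnum n R \<delta> x0 =
     (SUP P\<in>{P. finite P \<and> P \<subseteq> dpaths \<delta> x0 n \<and> separated R P}. ereal (real (card P)))"

definition lnE :: "ereal \<Rightarrow> ereal" where
  "lnE v = (if v = \<infinity> then \<infinity> else if v \<le> 0 then -\<infinity> else ereal (ln (real_of_ereal v)))"

definition coarse_entropy :: "'a::metric_space \<Rightarrow> ereal" where
  "coarse_entropy x0 =
     Lim at_top (\<lambda>\<delta>::real. Lim at_top (\<lambda>R::real.
        limsup (\<lambda>n. ereal (1 / real n) * lnE (sepnum n R \<delta> x0))))"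

end

theory Submission
  imports Defs
begin

text \<open>
  (i) If the volume \<open>V\<^sub>\<delta>\<close> grows subexponentially, fix \<open>k\<close> with \<open>V\<^sub>\<delta>(k) \<le> e\<^bsup>\<epsilon> k\<^esup>\<close>. Two
  \<open>\<delta>\<close>-paths that agree at the times \<open>0, k, 2k, \<dots>\<close> stay \<open>2k\<delta>\<close>-close, and the sampled
  sequences are chains whose steps lie in \<open>\<delta>\<close>-balls of radius \<open>k\<close>; hence an \<open>R\<close>-separated
  family of paths of length \<open>n\<close> has at most \<open>V\<^sub>\<delta>(k)\<^bsup>n/k\<^esup>\<close> members once \<open>R \<ge> 2k\<delta>\<close>, and the
  entropy is at most \<open>\<epsilon>\<close>.

  (ii) If \<open>V\<^sub>\<delta>(L) > e\<^bsup>c L\<^esup>\<close> for infinitely many \<open>L\<close>, then for \<open>\<delta>' \<ge> m\<delta>\<close> a big \<open>\<delta>\<close>-ball of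
  radius \<open>L\<close> lies in a \<open>\<delta>'\<close>-ball of radius about \<open>L/m\<close> and, by bounded geometry, contains an
  \<open>R\<close>-separated set \<open>A\<close> of size \<open>\<ge> e\<^bsup>c L/2\<^esup>\<close>. Concatenating \<open>k\<close> out-and-back excursions to
  points of \<open>A\<close> gives \<open>|A|\<^sup>k\<close> separated \<open>\<delta>'\<close>-paths of length about \<open>2kL/m\<close>, so the entropy
  at scale \<open>\<delta>'\<close> is at least of order \<open>c m\<close>, which is unbounded as \<open>\<delta>' \<rightarrow> \<infinity>\<close>.
\<close>

lemma less_Limsup_imp_frequently:
  fixes f :: "'b \<Rightarrow> 'a::complete_linorder"
  assumes "a < Limsup F f"
  shows "\<exists>\<^sub>F x in F. a < f x"
proof (rule ccontr)
  assume "\<not> (\<exists>\<^sub>F x in F. a < f x)"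
  then have "Limsup F f \<le> a" by (intro Limsup_bounded) (simp add: not_frequently not_less)
  then show False using assms by simp
qed

lemma frequently_le_imp_le_Limsup:
  fixes f :: "'b \<Rightarrow> 'a::complete_linorder"
  assumes "\<exists>\<^sub>F x in F. a \<le> f x"
  shows "a \<le> Limsup F f"
proof (rule ccontr)
  assume "\<not> a \<le> Limsup F f"
  then have "eventually (\<lambda>x. f x < a) F" by (intro Limsup_lessD) simp
  then show False using assms by (simp add: frequently_def eventually_mono not_le)
qed

lemma antimono_tendsto_INF:
  fixes f :: "'a::linorder \<Rightarrow> 'b::{complete_linorder, linorder_topology}"
  assumes "\<And>R R'. R \<le> R' \<Longrightarrow> f R' \<le> f R"
  shows "(f \<longlongrightarrow> (INF R. f R)) at_top"
proof (rule order_tendstoI)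
  fix a assume "a < (INF R. f R)"
  then show "eventually (\<lambda>R. a < f R) at_top"
    by (intro always_eventually allI) (meson INF_lower UNIV_I less_le_trans)
next
  fix a assume "(INF R. f R) < a"
  then obtain R0 where "f R0 < a" unfolding INF_less_iff by blast
  then show "eventually (\<lambda>R. f R < a) at_top"
    unfolding eventually_at_top_linorder using assms by (meson le_less_trans)
qed

lemma first_difference:
  assumes "length w = length w'" "w \<noteq> w'"
  obtains u a b v v' where "a \<noteq> b" "w = u @ a # v" "w' = u @ b # v'"
proof -
  have "\<exists>u a b v v'. a \<noteq> b \<and> w = u @ a # v \<and> w' = u @ b # v'"
    using assms
  proof (induction w arbitrary: w')
    case (Cons c w)
    then obtain c' w'' where w': "w' = c' # w''" by (cases w') auto
    show ?case
    proof (cases "c = c'")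
      case True
      then have "length w = length w''" "w \<noteq> w''" using Cons.prems w' by auto
      then obtain u a b v v' where "a \<noteq> b" "w = u @ a # v" "w'' = u @ b # v'"
        using Cons.IH by blast
      then show ?thesis using True w' by (intro exI[of _ "c # u"]) auto
    next
      case False
      then show ?thesis using w' by (intro exI[of _ "[]"]) auto
    qed
  qed simp
  then show ?thesis using that by blast
qed

lemma maximal_separated_subset:
  fixes B :: "'a::metric_space set"
  assumes "finite B" "0 \<le> R"
  obtains A where "A \<subseteq> B" "\<forall>a\<in>A. \<forall>b\<in>A. a \<noteq> b \<longrightarrow> R < dist a b" "B \<subseteq> (\<Union>a\<in>A. cball a R)"
proof -
  have "\<exists>A\<subseteq>B. (\<forall>a\<in>A. \<forall>b\<in>A. a \<noteq> b \<longrightarrow> R < dist a b) \<and> B \<subseteq> (\<Union>a\<in>A. cball a R)"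
    using assms(1)
  proof (induction B rule: finite_induct)
    case (insert b B)
    then obtain A where A: "A \<subseteq> B" "\<forall>a\<in>A. \<forall>b\<in>A. a \<noteq> b \<longrightarrow> R < dist a b"
      "B \<subseteq> (\<Union>a\<in>A. cball a R)"
      by blast
    show ?case
    proof (cases "b \<in> (\<Union>a\<in>A. cball a R)")
      case True
      then show ?thesis using A by (intro exI[of _ A]) auto
    next
      case False
      then have "\<forall>a\<in>A. R < dist a b" by (auto simp: mem_cball not_le)
      then show ?thesis using A by (intro exI[of _ "insert b A"]) (auto simp: dist_commute assms(2))
    qed
  qed simp
  then show ?thesis using that by blast
qed

lemma card_le_card_separated_subset:
  fixes B :: "'a::metric_space set"
  assumes "finite B" "0 \<le> R" and C: "\<And>y::'a. finite (cball y R)" "\<And>y::'a. card (cball y R) \<le> C"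
  obtains A where "A \<subseteq> B" "\<forall>a\<in>A. \<forall>b\<in>A. a \<noteq> b \<longrightarrow> R < dist a b" "card B \<le> card A * C"
proof -
  obtain A where A: "A \<subseteq> B" "\<forall>a\<in>A. \<forall>b\<in>A. a \<noteq> b \<longrightarrow> R < dist a b"
    "B \<subseteq> (\<Union>a\<in>A. cball a R)"
    using maximal_separated_subset[OF assms(1,2)] by blast
  have "finite A" using A(1) assms(1) by (rule finite_subset)
  then have "finite (\<Union>a\<in>A. cball a R)" by (simp add: C(1))
  then have "card B \<le> card (\<Union>a\<in>A. cball a R)" using A(3) by (rule card_mono)
  also have "\<dots> \<le> (\<Sum>a\<in>A. card (cball a R))" by (rule card_UN_le[OF \<open>finite A\<close>])
  also have "\<dots> \<le> card A * C" using sum_mono[of A "\<lambda>a. card (cball a R)" "\<lambda>_. C"] C(2) by simp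
  finally show ?thesis by (rule that[OF A(1,2)])
qed

lemma dpath_dist_le:
  assumes "dpath \<delta> p" "i \<le> j" "j < length p"
  shows "dist (p ! i) (p ! j) \<le> real (j - i) * \<delta>"
  using assms(2,3)
proof (induction j)
  case 0
  then show ?case by simp
next
  case (Suc j)
  show ?case
  proof (cases "i = Suc j")
    case False
    then have ij: "i \<le> j" using Suc by simp
    have "dist (p ! i) (p ! Suc j) \<le> dist (p ! i) (p ! j) + dist (p ! j) (p ! Suc j)"
      by (rule dist_triangle)
    also have "\<dots> \<le> real (j - i) * \<delta> + \<delta>"
      using Suc ij assms(1) unfolding dpath_def by (intro add_mono) auto
    also have "\<dots> = real (Suc j - i) * \<delta>"
      using ij by (simp add: Suc_diff_le algebra_simps)
    finally show ?thesis .
  qed simp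
qed

lemma mem_dball_iff:
  "y \<in> dball \<delta> z l \<longleftrightarrow> (\<exists>p. dpath \<delta> p \<and> length p = Suc l \<and> hd p = z \<and> last p = y)"
  unfolding dball_def dpaths_def by auto

lemma dpath_nth_in_dball:
  assumes "dpath \<delta> p" "i \<le> j" "j < length p"
  shows "p ! j \<in> dball \<delta> (p ! i) (j - i)"
proof -
  let ?q = "take (Suc j - i) (drop i p)"
  have "dpath \<delta> ?q" using assms unfolding dpath_def by auto
  moreover have "length ?q = Suc (j - i)" "hd ?q = p ! i" "last ?q = p ! j"
    using assms by (simp_all add: hd_take hd_drop_conv_nth last_conv_nth Suc_diff_le)
  ultimately show ?thesis unfolding mem_dball_iff by blast
qed

lemma dpath_nth_in_dcomp:
  assumes "dpath \<delta> p" "i < length p"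
  shows "p ! i \<in> dcomp \<delta> (hd p)"
proof -
  have "p ! i \<in> dball \<delta> (p ! 0) (i - 0)"
    using assms by (intro dpath_nth_in_dball) auto
  then show ?thesis using assms
    unfolding mem_dball_iff dcomp_def by (auto simp: hd_conv_nth dpath_def)
qed

lemma dpath_append_tl:
  assumes "dpath \<delta> p" "dpath \<delta> q" "last p = hd q"
  shows "dpath \<delta> (p @ tl q)"
  unfolding dpath_def
proof (intro conjI allI impI)
  have ne: "p \<noteq> []" "q \<noteq> []" using assms by (auto simp: dpath_def)
  then show "p @ tl q \<noteq> []" by simp
  fix i assume i: "Suc i < length (p @ tl q)"
  consider "Suc i < length p" | "Suc i = length p" | "length p \<le> i" by linarith
  then show "dist ((p @ tl q) ! i) ((p @ tl q) ! Suc i) \<le> \<delta>"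
  proof cases
    case 1
    then show ?thesis using assms(1) by (simp add: nth_append dpath_def)
  next
    case 2
    then have "(p @ tl q) ! i = q ! 0"
      using assms(3) ne by (simp add: nth_append last_conv_nth hd_conv_nth flip: 2)
    moreover have "(p @ tl q) ! Suc i = q ! 1" "1 < length q"
      using 2 ne i by (auto simp: nth_append nth_tl)
    ultimately show ?thesis using assms(2) by (auto simp: dpath_def)
  next
    case 3
    then obtain k where k: "i = length p + k" using le_Suc_ex by blast
    then have "(p @ tl q) ! i = q ! Suc k" "(p @ tl q) ! Suc i = q ! Suc (Suc k)"
      "Suc (Suc k) < length q"
      using i ne by (simp_all add: nth_append nth_tl)
    then show ?thesis using assms(2) by (simp add: dpath_def)
  qed
qed

lemma dpath_rev: "dpath \<delta> p \<Longrightarrow> dpath \<delta> (rev p)"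
  unfolding dpath_def
proof (intro conjI allI impI)
  assume p: "p \<noteq> [] \<and> (\<forall>i. Suc i < length p \<longrightarrow> dist (p ! i) (p ! Suc i) \<le> \<delta>)"
  then show "rev p \<noteq> []" by simp
  fix i assume i: "Suc i < length (rev p)"
  let ?j = "length p - Suc (Suc i)"
  have "rev p ! i = p ! Suc ?j" "rev p ! Suc i = p ! ?j" "Suc ?j < length p"
    using i by (simp_all add: rev_nth Suc_diff_Suc)
  then show "dist (rev p ! i) (rev p ! Suc i) \<le> \<delta>" using p by (simp add: dist_commute)
qed

lemma dpath_mono: "dpath \<delta> p \<Longrightarrow> \<delta> \<le> \<delta>' \<Longrightarrow> dpath \<delta>' p"
  unfolding dpath_def by force

lemma dpath_replicate: "0 \<le> \<delta> \<Longrightarrow> dpath \<delta> (replicate (Suc n) x)"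
  unfolding dpath_def by (simp del: replicate_Suc)

lemma self_in_dball: "0 \<le> \<delta> \<Longrightarrow> z \<in> dball \<delta> z l"
  unfolding mem_dball_iff
  by (rule exI[of _ "replicate (Suc l) z"]) (simp add: dpath_replicate del: replicate_Suc)

lemma self_in_dcomp: "x \<in> dcomp \<delta> x"
  unfolding dcomp_def dpath_def by (rule CollectI, rule exI[of _ "[x]"]) simp

lemma dball_subset_cball: "0 \<le> \<delta> \<Longrightarrow> dball \<delta> z l \<subseteq> cball z (real l * \<delta>)"
proof
  fix y assume "0 \<le> \<delta>" "y \<in> dball \<delta> z l"
  then obtain p where p: "dpath \<delta> p" "length p = Suc l" "hd p = z" "last p = y"
    unfolding mem_dball_iff by blast
  then have "p ! 0 = z" "p ! l = y" by (auto simp: hd_conv_nth last_conv_nth dpath_def)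
  moreover have "dist (p ! 0) (p ! l) \<le> real (l - 0) * \<delta>"
    using p by (intro dpath_dist_le) auto
  ultimately show "y \<in> cball z (real l * \<delta>)" by (simp add: mem_cball)
qed

lemma bounded_geometryE:
  assumes "bounded_geometry TYPE('a::metric_space)" "0 < r"
  obtains C :: nat where "\<And>y::'a. finite (cball y r)" "\<And>y::'a. card (cball y r) \<le> C"
  using assms unfolding bounded_geometry_def by blast

lemma uniformly_bounded_card_dball:
  assumes "bounded_geometry TYPE('a::metric_space)" "0 \<le> \<delta>"
  obtains C :: nat where "\<And>z::'a. finite (dball \<delta> z l)" "\<And>z::'a. card (dball \<delta> z l) \<le> C"
proof -
  have "0 < real l * \<delta> + 1" using assms(2) by (simp add: add_nonneg_pos)
  then obtain C :: nat where C: "\<And>y::'a. finite (cball y (real l * \<delta> + 1))"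
    "\<And>y::'a. card (cball y (real l * \<delta> + 1)) \<le> C"
    using bounded_geometryE[OF assms(1)] by blast
  have "dball \<delta> z l \<subseteq> cball z (real l * \<delta> + 1)" for z :: 'a
    using dball_subset_cball[OF assms(2)] by fastforce
  then show ?thesis using C that by (meson card_mono finite_subset le_trans)
qed

lemma finite_dball:
  assumes "bounded_geometry TYPE('a::metric_space)" "0 \<le> \<delta>"
  shows "finite (dball \<delta> (z::'a) l)"
  using uniformly_bounded_card_dball[OF assms] by metis

lemma card_dball_le_Vol: "z \<in> dcomp \<delta> x \<Longrightarrow> ereal (real (card (dball \<delta> z l))) \<le> Vol x \<delta> l"
  unfolding Vol_def by (rule SUP_upper)

lemma Vol_realE:
  assumes "bounded_geometry TYPE('a::metric_space)" "0 \<le> \<delta>"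
  obtains v where "Vol (x::'a) \<delta> l = ereal v" "1 \<le> v"
proof -
  obtain C :: nat where C: "\<And>z::'a. finite (dball \<delta> z l)" "\<And>z::'a. card (dball \<delta> z l) \<le> C"
    using uniformly_bounded_card_dball[OF assms] by metis
  have upper: "Vol x \<delta> l \<le> ereal (real C)" unfolding Vol_def using C(2) by (intro SUP_least) simp
  have "1 \<le> card (dball \<delta> x l)"
    using C(1)[of x] self_in_dball[OF assms(2)] by (auto simp: Suc_le_eq card_gt_0_iff)
  then have "(1 :: ereal) \<le> ereal (real (card (dball \<delta> x l)))" by simp
  also have "\<dots> \<le> Vol x \<delta> l" by (rule card_dball_le_Vol[OF self_in_dcomp])
  finally show ?thesis using upper that by (cases "Vol x \<delta> l") auto
qed

lemma sepnum_ge_1: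
  assumes "0 \<le> \<delta>" shows "1 \<le> sepnum n R \<delta> x0"
proof -
  have "{replicate (Suc n) x0} \<in> {P. finite P \<and> P \<subseteq> dpaths \<delta> x0 n \<and> separated R P}"
    using assms by (simp add: dpaths_def dpath_replicate separated_def del: replicate_Suc)
  then have "ereal (real (card {replicate (Suc n) x0})) \<le> sepnum n R \<delta> x0"
    unfolding sepnum_def by (rule SUP_upper)
  then show ?thesis by (simp add: one_ereal_def)
qed

lemma sepnum_antimono:
  "R \<le> R' \<Longrightarrow> sepnum n R' \<delta> x \<le> sepnum n R \<delta> x"
  unfolding sepnum_def separated_def by (rule SUP_subset_mono) force+

lemma lnE_ereal: "0 < r \<Longrightarrow> lnE (ereal r) = ereal (ln r)"
  unfolding lnE_def by simp

lemma lnE_mono: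
  assumes "1 \<le> a" "a \<le> b" shows "lnE a \<le> lnE b"
  using assms by (cases a; cases b) (auto simp: lnE_def)

section \<open>Subexponential volume growth: entropy zero\<close>

definition sep_growth :: "'a::metric_space \<Rightarrow> real \<Rightarrow> real \<Rightarrow> ereal" where
  "sep_growth x \<delta> R = limsup (\<lambda>n. ereal (1 / real n) * lnE (sepnum n R \<delta> x))"

lemma coarse_entropy_eq_Lim_sep_growth:
  "coarse_entropy x = Lim at_top (\<lambda>\<delta>. Lim at_top (\<lambda>R. sep_growth x \<delta> R))"
  unfolding coarse_entropy_def sep_growth_def ..

lemma sep_growth_nonneg:
  assumes "0 \<le> \<delta>" shows "0 \<le> sep_growth x \<delta> R"
  unfolding sep_growth_def
proof (intro le_Limsup always_eventually allI)
  fix n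
  have "lnE 1 \<le> lnE (sepnum n R \<delta> x)" using sepnum_ge_1[OF assms] by (intro lnE_mono) auto
  moreover have "lnE 1 = 0" by (simp add: lnE_def zero_ereal_def)
  ultimately show "0 \<le> ereal (1 / real n) * lnE (sepnum n R \<delta> x)"
    by (simp add: ereal_zero_le_0_iff)
qed simp

lemma sep_growth_antimono:
  assumes "0 \<le> \<delta>" "R \<le> R'"
  shows "sep_growth x \<delta> R' \<le> sep_growth x \<delta> R"
  unfolding sep_growth_def
proof (intro Limsup_mono always_eventually allI)
  fix n
  have "lnE (sepnum n R' \<delta> x) \<le> lnE (sepnum n R \<delta> x)"
    using sepnum_ge_1[OF assms(1)] sepnum_antimono[OF assms(2)] by (intro lnE_mono) auto
  then show "ereal (1 / real n) * lnE (sepnum n R' \<delta> x) \<le> ereal (1 / real n) * lnE (sepnum n R \<delta> x)"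
    by (intro ereal_mult_left_mono) auto
qed

definition step_chains :: "'b \<Rightarrow> 'b set \<Rightarrow> ('b \<Rightarrow> 'b set) \<Rightarrow> nat \<Rightarrow> 'b list set" where
  "step_chains x D f q =
     {zs. length zs = Suc q \<and> hd zs = x \<and> set zs \<subseteq> D \<and> (\<forall>j<q. zs ! Suc j \<in> f (zs ! j))}"

lemma step_chains_Suc_subset:
  "step_chains x D f (Suc q) \<subseteq> (\<lambda>(zs, z). zs @ [z]) ` (SIGMA zs:step_chains x D f q. f (last zs))"
proof
  fix zs assume zs: "zs \<in> step_chains x D f (Suc q)"
  let ?ys = "butlast zs"
  have len: "length zs = Suc (Suc q)" using zs by (simp add: step_chains_def)
  then have eq: "zs = ?ys @ [last zs]" by (metis append_butlast_last_id list.size(3) nat.distinct(1))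
  have "hd ?ys = hd zs" using len by (cases zs) auto
  then have "hd ?ys = x" "set ?ys \<subseteq> D" "\<forall>j<q. ?ys ! Suc j \<in> f (?ys ! j)"
    using zs len by (auto simp: step_chains_def nth_butlast dest: in_set_butlastD)
  then have ys: "?ys \<in> step_chains x D f q" using len by (simp add: step_chains_def)
  have ys_len: "length ?ys = Suc q" using len by simp
  have "?ys \<noteq> []" using ys_len by (metis length_0_conv nat.distinct(1))
  then have "last ?ys = ?ys ! (length ?ys - 1)" by (rule last_conv_nth)
  also have "\<dots> = zs ! q" using ys_len len by (simp add: nth_butlast)
  finally have "last ?ys = zs ! q" .
  moreover have "last zs = zs ! (length zs - 1)" by (rule last_conv_nth) (use len in auto)
  then have "last zs = zs ! Suc q" using len by simp
  ultimately have "last zs \<in> f (last ?ys)" using zs by (simp add: step_chains_def)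
  with ys eq show "zs \<in> (\<lambda>(zs, z). zs @ [z]) ` (SIGMA zs:step_chains x D f q. f (last zs))"
    by (intro image_eqI[of _ _ "(?ys, last zs)"]) auto
qed

lemma finite_card_step_chains:
  assumes fin: "\<And>z. z \<in> D \<Longrightarrow> finite (f z)" and bd: "\<And>z. z \<in> D \<Longrightarrow> real (card (f z)) \<le> M"
    and "0 \<le> M"
  shows "finite (step_chains x D f q) \<and> real (card (step_chains x D f q)) \<le> M ^ q"
proof (induction q)
  case 0
  have sub: "step_chains x D f 0 \<subseteq> {[x]}" unfolding step_chains_def by (auto simp: length_Suc_conv)
  then have "card (step_chains x D f 0) \<le> 1" using card_mono[OF _ sub] by simp
  then show ?case using finite_subset[OF sub] by simp
next
  case (Suc q)
  let ?S = "SIGMA zs:step_chains x D f q. f (last zs)"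
  have last_in: "last zs \<in> D" if "zs \<in> step_chains x D f q" for zs
    using that unfolding step_chains_def by (auto intro!: subsetD[of "set zs" D] last_in_set)
  have finS: "finite ?S" using Suc.IH fin last_in by (intro finite_SigmaI) auto
  have "card (step_chains x D f (Suc q)) \<le> card ((\<lambda>(zs, z). zs @ [z]) ` ?S)"
    by (rule card_mono[OF finite_imageI[OF finS] step_chains_Suc_subset])
  also have "\<dots> \<le> card ?S" by (rule card_image_le[OF finS])
  finally have "real (card (step_chains x D f (Suc q))) \<le> real (card ?S)" by simp
  also have "\<dots> = (\<Sum>zs\<in>step_chains x D f q. real (card (f (last zs))))"
    using Suc.IH fin last_in by (subst card_SigmaI) auto
  also have "\<dots> \<le> (\<Sum>zs\<in>step_chains x D f q. M)" using bd last_in by (intro sum_mono) auto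
  also have "\<dots> = real (card (step_chains x D f q)) * M" by simp
  also have "\<dots> \<le> M ^ Suc q"
    using mult_right_mono[OF conjunct2[OF Suc.IH] assms(3)] by (simp only: power_Suc2)
  finally show ?case using finite_subset[OF step_chains_Suc_subset finite_imageI[OF finS]] by blast
qed

definition sample_points :: "nat \<Rightarrow> nat \<Rightarrow> 'b list \<Rightarrow> 'b list" where
  "sample_points k q p = map (\<lambda>j. p ! (j * k)) [0..<Suc q]"

lemma sample_points_in_step_chains:
  assumes p: "p \<in> dpaths \<delta> x n" and "1 \<le> k"
  shows "sample_points k (n div k) p \<in> step_chains x (dcomp \<delta> x) (\<lambda>z. dball \<delta> z k) (n div k)"
proof -
  have p: "dpath \<delta> p" "length p = Suc n" "hd p = x" using p by (auto simp: dpaths_def)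
  have jk: "j * k \<le> n" if "j \<le> n div k" for j
    using that less_eq_div_iff_mult_less_eq[of k j n] \<open>1 \<le> k\<close> by simp
  have "hd (sample_points k (n div k) p) = x"
    using p by (simp add: sample_points_def hd_map hd_conv_nth dpath_def del: upt_Suc)
  moreover have "set (sample_points k (n div k) p) \<subseteq> dcomp \<delta> x"
    using dpath_nth_in_dcomp[OF p(1)] jk p
    by (auto simp: sample_points_def less_Suc_eq_le simp del: upt_Suc)
  moreover have "sample_points k (n div k) p ! Suc j \<in> dball \<delta> (sample_points k (n div k) p ! j) k"
    if "j < n div k" for j
  proof -
    have "j * k + k \<le> n" using jk[of "Suc j"] that by (simp add: add.commute)
    then have "p ! (j * k + k) \<in> dball \<delta> (p ! (j * k)) (j * k + k - j * k)"
      using p by (intro dpath_nth_in_dball) auto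
    then show ?thesis using that by (simp add: sample_points_def nth_append add.commute del: upt_Suc)
  qed
  ultimately show ?thesis unfolding step_chains_def sample_points_def by simp
qed

lemma pdist_le_if_eq_at_multiples:
  assumes p: "dpath \<delta> p" "dpath \<delta> p'" "length p' = length p" and "1 \<le> k" "0 \<le> \<delta>"
    and eq: "\<And>j. j * k < length p \<Longrightarrow> p ! (j * k) = p' ! (j * k)"
  shows "pdist p p' \<le> 2 * real k * \<delta>"
  unfolding pdist_def
proof (intro Max.boundedI)
  show "{dist (p ! i) (p' ! i) |i. i < length p} \<noteq> {}" using p by (auto simp: dpath_def)
  fix a assume "a \<in> {dist (p ! i) (p' ! i) |i. i < length p}"
  then obtain i where i: "i < length p" and a: "a = dist (p ! i) (p' ! i)" by blast
  define j where "j = i div k"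
  have jk: "j * k \<le> i" "i - j * k \<le> k"
    unfolding j_def using \<open>1 \<le> k\<close> by (simp_all add: div_times_less_eq_dividend minus_div_mult_eq_mod
        less_imp_le)
  have "a \<le> dist (p ! (j * k)) (p ! i) + dist (p' ! (j * k)) (p' ! i)"
    using eq[of j] jk i dist_triangle2[of "p ! i" "p' ! i" "p ! (j * k)"] by (simp add: a dist_commute)
  also have "\<dots> \<le> real (i - j * k) * \<delta> + real (i - j * k) * \<delta>"
    using p i jk by (intro add_mono dpath_dist_le) auto
  also have "\<dots> \<le> 2 * real k * \<delta>"
  proof -
    have "real (i - j * k) \<le> real k" using jk(2) by (simp only: of_nat_le_iff)
    then have "real (i - j * k) * \<delta> \<le> real k * \<delta>" using \<open>0 \<le> \<delta>\<close> by (rule mult_right_mono)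
    then show ?thesis unfolding mult.assoc by linarith
  qed
  finally show "a \<le> 2 * real k * \<delta>" .
qed simp

lemma sepnum_le_power:
  fixes x :: "'a::metric_space"
  assumes bg: "bounded_geometry TYPE('a)" and "0 \<le> \<delta>" "1 \<le> k" "2 * real k * \<delta> \<le> R"
    and bd: "\<And>z. z \<in> dcomp \<delta> x \<Longrightarrow> real (card (dball \<delta> z k)) \<le> M"
  shows "sepnum n R \<delta> x \<le> ereal (M ^ (n div k))"
  unfolding sepnum_def
proof (rule SUP_least, clarify)
  fix P assume P: "finite P" "P \<subseteq> dpaths \<delta> x n" "separated R P"
  let ?T = "step_chains x (dcomp \<delta> x) (\<lambda>z. dball \<delta> z k) (n div k)"
  have T: "finite ?T" "real (card ?T) \<le> M ^ (n div k)"
    using finite_card_step_chains[of "dcomp \<delta> x" "\<lambda>z. dball \<delta> z k" M] finite_dball[OF bg \<open>0 \<le> \<delta>\<close>]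
      bd[OF self_in_dcomp] bd by auto
  have "inj_on (sample_points k (n div k)) P"
  proof (rule inj_onI, rule ccontr)
    fix p p' assume pp': "p \<in> P" "p' \<in> P" "sample_points k (n div k) p = sample_points k (n div k) p'"
      "p \<noteq> p'"
    have paths: "dpath \<delta> p" "dpath \<delta> p'" "length p = Suc n" "length p' = Suc n"
      using pp' P by (auto simp: dpaths_def)
    have "p ! (j * k) = p' ! (j * k)" if "j * k < length p" for j
    proof -
      have "j < Suc (n div k)"
        using that paths less_eq_div_iff_mult_less_eq[of k j n] \<open>1 \<le> k\<close> by simp
      then show ?thesis using arg_cong[OF pp'(3), of "\<lambda>s. s ! j"]
        by (simp add: sample_points_def del: upt_Suc)
    qed
    then have "pdist p p' \<le> 2 * real k * \<delta>"
      using paths assms(2,3) by (intro pdist_le_if_eq_at_multiples) auto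
    moreover have "R < pdist p p'" using P(3) pp' unfolding separated_def by blast
    ultimately show False using assms(4) by linarith
  qed
  moreover have "sample_points k (n div k) ` P \<subseteq> ?T"
    using sample_points_in_step_chains[OF _ \<open>1 \<le> k\<close>] P(2) by blast
  ultimately have "card P \<le> card ?T" using T(1) by (rule card_inj_on_le)
  then show "ereal (real (card P)) \<le> ereal (M ^ (n div k))" using T(2) by simp
qed

lemma sep_growth_le_ln_Vol:
  fixes x :: "'a::metric_space"
  assumes bg: "bounded_geometry TYPE('a)" and "0 \<le> \<delta>" "1 \<le> k" "2 * real k * \<delta> \<le> R"
    and M: "Vol x \<delta> k = ereal M"
  shows "sep_growth x \<delta> R \<le> ereal (ln M / real k)"
  unfolding sep_growth_def
proof (intro Limsup_bounded eventually_sequentiallyI)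
  fix n :: nat assume "1 \<le> n"
  obtain v where "Vol x \<delta> k = ereal v" "1 \<le> v" using Vol_realE[OF bg \<open>0 \<le> \<delta>\<close>] by blast
  then have "1 \<le> M" using M by simp
  have "real (card (dball \<delta> z k)) \<le> M" if "z \<in> dcomp \<delta> x" for z
    using card_dball_le_Vol[OF that, of k] M by simp
  then have "sepnum n R \<delta> x \<le> ereal (M ^ (n div k))"
    using assms by (intro sepnum_le_power) auto
  then have "lnE (sepnum n R \<delta> x) \<le> lnE (ereal (M ^ (n div k)))"
    using sepnum_ge_1[OF \<open>0 \<le> \<delta>\<close>] by (intro lnE_mono) auto
  also have "\<dots> = ereal (real (n div k) * ln M)" using \<open>1 \<le> M\<close> by (simp add: lnE_ereal ln_realpow)
  finally have "ereal (1 / real n) * lnE (sepnum n R \<delta> x) \<le> ereal (1 / real n) * ereal (real (n div k) * ln M)"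
    by (intro ereal_mult_left_mono) auto
  also have "\<dots> = ereal (real (n div k) / real n * ln M)" by simp
  also have "\<dots> \<le> ereal (ln M / real k)"
  proof -
    have "real (n div k) * real k \<le> real n"
      by (metis div_times_less_eq_dividend of_nat_le_iff of_nat_mult)
    then have "real (n div k) / real n \<le> 1 / real k"
      using \<open>1 \<le> n\<close> \<open>1 \<le> k\<close> by (simp add: field_simps)
    then have "real (n div k) / real n * ln M \<le> 1 / real k * ln M"
      using ln_ge_zero[OF \<open>1 \<le> M\<close>] by (rule mult_right_mono)
    then show ?thesis by simp
  qed
  finally show "ereal (1 / real n) * lnE (sepnum n R \<delta> x) \<le> ereal (ln M / real k)" .
qed

lemma sep_growth_tendsto_0:
  fixes x :: "'a::metric_space"
  assumes bg: "bounded_geometry TYPE('a)" and "0 < \<delta>"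
    and Vol: "(\<lambda>l. ereal (1 / real l) * lnE (Vol x \<delta> l)) \<longlonglongrightarrow> 0"
  shows "((\<lambda>R. sep_growth x \<delta> R) \<longlongrightarrow> 0) at_top"
proof (rule order_tendstoI)
  fix a :: ereal assume "a < 0"
  then show "eventually (\<lambda>R. a < sep_growth x \<delta> R) at_top"
    using sep_growth_nonneg[of \<delta> x] \<open>0 < \<delta>\<close> by (intro always_eventually allI) (meson less_le_trans less_imp_le)
next
  fix a :: ereal assume "0 < a"
  then obtain r where r: "0 < ereal r" "ereal r < a" using ereal_dense2 by blast
  then obtain N where N: "\<And>l. N \<le> l \<Longrightarrow> ereal (1 / real l) * lnE (Vol x \<delta> l) < ereal r"
    using order_tendstoD(2)[OF Vol] unfolding eventually_sequentially by blast
  define k where "k = max N 1"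
  have "1 \<le> k" "N \<le> k" by (simp_all add: k_def)
  obtain M where M: "Vol x \<delta> k = ereal M" "1 \<le> M"
    using Vol_realE[OF bg less_imp_le[OF \<open>0 < \<delta>\<close>]] by blast
  have "ereal (ln M / real k) < ereal r" using N[OF \<open>N \<le> k\<close>] M by (simp add: lnE_ereal)
  have "sep_growth x \<delta> R < a" if "2 * real k * \<delta> \<le> R" for R
  proof -
    have "sep_growth x \<delta> R \<le> ereal (ln M / real k)"
      using sep_growth_le_ln_Vol[OF bg _ \<open>1 \<le> k\<close> that M(1)] \<open>0 < \<delta>\<close> by simp
    also have "\<dots> < a" using \<open>ereal (ln M / real k) < ereal r\<close> r(2) by (rule less_trans)
    finally show ?thesis .
  qed
  then show "eventually (\<lambda>R. sep_growth x \<delta> R < a) at_top"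
    unfolding eventually_at_top_linorder by blast
qed

lemma coarse_entropy_eq_0:
  fixes x :: "'a::metric_space"
  assumes "bounded_geometry TYPE('a)"
    and "\<forall>\<delta>>0. ((\<lambda>l. ereal (1 / real l) * lnE (Vol x \<delta> l)) \<longlonglongrightarrow> 0)"
  shows "coarse_entropy x = 0"
proof -
  have "Lim at_top (\<lambda>R. sep_growth x \<delta> R) = 0" if "1 \<le> \<delta>" for \<delta>
    using sep_growth_tendsto_0[OF assms(1)] assms(2) that by (intro tendsto_Lim) auto
  then have "eventually (\<lambda>\<delta>. Lim at_top (\<lambda>R. sep_growth x \<delta> R) = 0) at_top"
    by (rule eventually_at_top_linorderI)
  then show ?thesis unfolding coarse_entropy_eq_Lim_sep_growth
    by (intro tendsto_Lim) (auto intro: tendsto_eventually)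
qed

section \<open>Exponential volume growth: infinite entropy\<close>

lemma dball_subset_dball_coarser:
  assumes "1 \<le> m" "0 \<le> \<delta>" "real m * \<delta> \<le> \<delta>'" "L \<le> m * l'"
  shows "dball \<delta> z L \<subseteq> dball \<delta>' z l'"
proof
  fix y assume "y \<in> dball \<delta> z L"
  then obtain p where p: "dpath \<delta> p" "length p = Suc L" "hd p = z" "last p = y"
    unfolding mem_dball_iff by blast
  define q where "q = map (\<lambda>j. p ! min (j * m) L) [0..<Suc l']"
  have "dpath \<delta>' q" unfolding dpath_def
  proof (intro conjI allI impI)
    show "q \<noteq> []" by (simp add: q_def del: upt_Suc)
    fix j assume "Suc j < length q"
    then have q: "q ! j = p ! min (j * m) L" "q ! Suc j = p ! min (Suc j * m) L"
      by (simp_all add: q_def nth_map nth_upt del: upt_Suc)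
    have "min (Suc j * m) L - min (j * m) L \<le> m" by (simp add: min_def) arith
    then have "real (min (Suc j * m) L - min (j * m) L) * \<delta> \<le> real m * \<delta>"
      using assms(2) by (intro mult_right_mono) auto
    moreover have "dist (q ! j) (q ! Suc j) \<le> real (min (Suc j * m) L - min (j * m) L) * \<delta>"
      unfolding q using p by (intro dpath_dist_le) auto
    ultimately show "dist (q ! j) (q ! Suc j) \<le> \<delta>'" using assms(3) by linarith
  qed
  moreover have "length q = Suc l'" by (simp add: q_def del: upt_Suc)
  moreover have "hd q = z" using p by (simp add: q_def hd_map hd_conv_nth dpath_def del: upt_Suc)
  moreover have "last q = y"
  proof -
    have "last q = q ! l'" by (simp add: q_def last_conv_nth del: upt_Suc)
    also have "\<dots> = p ! min (l' * m) L" by (simp add: q_def nth_map nth_upt del: upt_Suc)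
    also have "min (l' * m) L = L" using assms(4) by (simp add: mult.commute)
    finally show ?thesis using p by (simp add: last_conv_nth dpath_def)
  qed
  ultimately show "y \<in> dball \<delta>' z l'" unfolding mem_dball_iff by blast
qed

text \<open>Go out along a path to \<open>a\<close> and come back along its reversal.\<close>

lemma dball_loop:
  assumes "a \<in> dball \<delta> x0 l" "1 \<le> l"
  obtains t where "dpath \<delta> (x0 # t)" "length t = 2 * l" "t ! (l - 1) = a" "last t = x0"
proof -
  obtain p where p: "dpath \<delta> p" "length p = Suc l" "hd p = x0" "last p = a"
    using assms(1) unfolding mem_dball_iff by blast
  define t where "t = tl (p @ tl (rev p))"
  have rev_ne: "tl (rev p) \<noteq> []" using p(2) assms(2) by (cases "rev p") auto
  have "x0 # t = p @ tl (rev p)" using p by (cases p) (auto simp: t_def dpath_def)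
  moreover have "dpath \<delta> (p @ tl (rev p))"
    using p by (intro dpath_append_tl dpath_rev) (auto simp: hd_rev)
  moreover have "length t = 2 * l" using p(2) by (simp add: t_def)
  moreover have "t ! (l - 1) = a"
    using p assms(2) by (simp add: t_def nth_tl nth_append last_conv_nth dpath_def)
  moreover have "last t = x0"
  proof -
    have "last t = last (p @ tl (rev p))" unfolding t_def using rev_ne p(2) by (intro last_tl) (cases p, auto)
    also have "\<dots> = last (rev p)" using rev_ne by (simp add: last_tl)
    finally show ?thesis using p by (simp add: last_rev)
  qed
  ultimately show ?thesis using that by metis
qed

lemma dpath_append_loops:
  assumes "dpath \<delta> \<rho>" "last \<rho> = x0"
    and loops: "\<And>a. a \<in> set w \<Longrightarrow> dpath \<delta> (x0 # t a) \<and> t a \<noteq> [] \<and> last (t a) = x0"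
  shows "dpath \<delta> (\<rho> @ concat (map t w)) \<and> last (\<rho> @ concat (map t w)) = x0"
  using loops
proof (induction w rule: rev_induct)
  case (snoc a w)
  then have "dpath \<delta> (\<rho> @ concat (map t w))" "last (\<rho> @ concat (map t w)) = x0"
    "dpath \<delta> (x0 # t a)" "t a \<noteq> []" "last (t a) = x0"
    by auto
  then show ?case using dpath_append_tl[of \<delta> "\<rho> @ concat (map t w)" "x0 # t a"] by simp
qed (use assms in simp)

lemma dist_nth_le_pdist: "i < length p \<Longrightarrow> dist (p ! i) (q ! i) \<le> pdist p q"
  unfolding pdist_def by (intro Max_ge) auto

lemma length_concat_map_const:
  "(\<And>a. a \<in> set w \<Longrightarrow> length (t a) = n) \<Longrightarrow> length (concat (map t w)) = n * length w"
  by (induction w) auto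

text \<open>The two paths are more than \<open>R\<close> apart at the time when the first loop where the words
  differ visits its point.\<close>

lemma concat_loops_separated:
  assumes "length \<rho> = Suc L0" "1 \<le> l"
    and t: "\<And>a. a \<in> A \<Longrightarrow> length (t a) = 2 * l \<and> t a ! (l - 1) = a"
    and sep: "\<forall>a\<in>A. \<forall>b\<in>A. a \<noteq> b \<longrightarrow> R < dist a b"
    and w: "set w \<subseteq> A" "set w' \<subseteq> A" "length w = length w'" "w \<noteq> w'"
  shows "\<rho> @ concat (map t w) \<noteq> \<rho> @ concat (map t w')
    \<and> R < pdist (\<rho> @ concat (map t w)) (\<rho> @ concat (map t w'))"
proof -
  obtain u a b v v' where uv: "a \<noteq> b" "w = u @ a # v" "w' = u @ b # v'"
    using first_difference w(3,4) by metis
  have "set u \<subseteq> A" "a \<in> A" "b \<in> A" using w(1,2) uv by auto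
  let ?i = "Suc L0 + 2 * l * length u + (l - 1)"
  have at_i: "(\<rho> @ concat (map t (u @ c # z))) ! ?i = c" if "c \<in> A" for c z
  proof -
    have len: "length (\<rho> @ concat (map t u)) = Suc L0 + 2 * l * length u"
      using length_concat_map_const[of u t "2 * l"] t \<open>set u \<subseteq> A\<close> assms(1) by auto
    have "(\<rho> @ concat (map t (u @ c # z))) ! ?i = (t c @ concat (map t z)) ! (l - 1)"
      using nth_append_length_plus[of "\<rho> @ concat (map t u)" "t c @ concat (map t z)" "l - 1"]
      unfolding len by simp
    also have "\<dots> = t c ! (l - 1)" using t[OF that] \<open>1 \<le> l\<close> by (intro nth_append_left) simp
    finally show ?thesis using t[OF that] by simp
  qed
  have "length (\<rho> @ concat (map t w)) = Suc L0 + 2 * l * (length u + Suc (length v))"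
    using length_concat_map_const[of w t "2 * l"] t w(1) uv(2) assms(1) by auto
  then have "?i < length (\<rho> @ concat (map t w))" using \<open>1 \<le> l\<close> by (simp add: algebra_simps)
  moreover have "R < dist a b" using sep \<open>a \<in> A\<close> \<open>b \<in> A\<close> uv(1) by blast
  ultimately show ?thesis
    using at_i[OF \<open>a \<in> A\<close>, of v] at_i[OF \<open>b \<in> A\<close>, of v'] uv
      dist_nth_le_pdist[of ?i "\<rho> @ concat (map t w)" "\<rho> @ concat (map t w')"] by auto
qed

lemma sepnum_ge_card_power:
  assumes \<rho>: "dpath \<delta> \<rho>" "hd \<rho> = x" "last \<rho> = x0" "length \<rho> = Suc L0"
    and A: "finite A" "A \<subseteq> dball \<delta> x0 l" "\<forall>a\<in>A. \<forall>b\<in>A. a \<noteq> b \<longrightarrow> R < dist a b"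
    and "1 \<le> l"
  shows "ereal (real (card A ^ k)) \<le> sepnum (L0 + 2 * l * k) R \<delta> x"
proof -
  have "\<forall>a\<in>A. \<exists>t. dpath \<delta> (x0 # t) \<and> length t = 2 * l \<and> t ! (l - 1) = a \<and> last t = x0"
    using A(2) dball_loop \<open>1 \<le> l\<close> by (metis subsetD)
  then obtain t where t: "\<And>a. a \<in> A \<Longrightarrow>
      dpath \<delta> (x0 # t a) \<and> length (t a) = 2 * l \<and> t a ! (l - 1) = a \<and> last (t a) = x0"
    by metis
  define W where "W w = \<rho> @ concat (map t w)" for w
  define Ws where "Ws = {w. set w \<subseteq> A \<and> length w = k}"
  have "W w \<noteq> W w' \<and> R < pdist (W w) (W w')" if "w \<in> Ws" "w' \<in> Ws" "w \<noteq> w'" for w w'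
    using concat_loops_separated[OF \<rho>(4) \<open>1 \<le> l\<close> _ A(3)] t that unfolding W_def Ws_def by auto
  then have inj: "inj_on W Ws" and sep: "separated R (W ` Ws)"
    unfolding inj_on_def separated_def by (meson, blast)
  have "W w \<in> dpaths \<delta> x (L0 + 2 * l * k)" if "w \<in> Ws" for w
  proof -
    have "dpath \<delta> (x0 # t a) \<and> t a \<noteq> [] \<and> last (t a) = x0" if "a \<in> set w" for a
      using t[of a] that \<open>w \<in> Ws\<close> \<open>1 \<le> l\<close> unfolding Ws_def by auto
    then have "dpath \<delta> (W w)" unfolding W_def using dpath_append_loops[OF \<rho>(1,3)] by blast
    moreover have "length (W w) = Suc (L0 + 2 * l * k)"
      using length_concat_map_const[of w t "2 * l"] t \<rho>(4) that unfolding W_def Ws_def by auto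
    moreover have "hd (W w) = x" using \<rho>(2,4) unfolding W_def by (cases \<rho>) auto
    ultimately show ?thesis unfolding dpaths_def by blast
  qed
  then have "W ` Ws \<subseteq> dpaths \<delta> x (L0 + 2 * l * k)" by blast
  moreover have "finite Ws" unfolding Ws_def using A(1) by (rule finite_lists_length_eq)
  ultimately have "ereal (real (card (W ` Ws))) \<le> sepnum (L0 + 2 * l * k) R \<delta> x"
    unfolding sepnum_def using sep by (intro SUP_upper) auto
  then show ?thesis
    using card_image[OF inj] card_lists_length_eq[OF A(1)] by (simp add: Ws_def)
qed

lemma le_loop_rate:
  fixes \<alpha> :: real
  assumes "0 \<le> \<alpha>" "L0 \<le> k" "1 \<le> k" "1 \<le> l" "n = L0 + 2 * l * k"
  shows "\<alpha> / (3 * real l) \<le> real k * \<alpha> / real n"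
proof -
  have "k \<le> l * k" using mult_le_mono1[OF \<open>1 \<le> l\<close>, of k] by simp
  moreover have "n = L0 + 2 * (l * k)" using assms(5) by (simp add: mult.assoc)
  ultimately have "n \<le> 3 * (l * k)" using assms(2) by linarith
  then have "real n \<le> real (3 * (l * k))" by (simp only: of_nat_le_iff)
  then have "real n \<le> 3 * real l * real k" by simp
  moreover have "0 < n" using assms(3-5) by simp
  then have "0 < real n" by simp
  ultimately have "real k * \<alpha> / (3 * real l * real k) \<le> real k * \<alpha> / real n"
    using assms(1,3,4) by (intro divide_left_mono) auto
  then show ?thesis using \<open>1 \<le> k\<close> by simp
qed

text \<open>The limsup is bounded from below along the times \<open>n = L0 + 2 l k\<close> with \<open>k \<ge> L0\<close>.\<close>

lemma sep_growth_ge_ln_card: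
  assumes \<rho>: "dpath \<delta> \<rho>" "hd \<rho> = x" "last \<rho> = x0"
    and A: "finite A" "A \<noteq> {}" "A \<subseteq> dball \<delta> x0 l" "\<forall>a\<in>A. \<forall>b\<in>A. a \<noteq> b \<longrightarrow> R < dist a b"
    and "1 \<le> l"
  shows "ereal (ln (real (card A)) / (3 * real l)) \<le> sep_growth x \<delta> R"
proof -
  define L0 where "L0 = length \<rho> - 1"
  have len: "length \<rho> = Suc L0" using \<rho>(1) unfolding L0_def dpath_def by simp
  define \<alpha> where "\<alpha> = ln (real (card A))"
  have "1 \<le> card A" using A(1,2) by (simp add: Suc_le_eq card_gt_0_iff)
  then have "0 \<le> \<alpha>" unfolding \<alpha>_def by simp
  have rate: "ereal (\<alpha> / (3 * real l)) \<le> ereal (1 / real n) * lnE (sepnum n R \<delta> x)"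
    if n: "n = L0 + 2 * l * k" "L0 \<le> k" "1 \<le> k" for n k
  proof -
    have "ereal (real k * \<alpha>) = lnE (ereal (real (card A ^ k)))"
      using \<open>1 \<le> card A\<close> unfolding \<alpha>_def by (simp add: lnE_ereal ln_realpow)
    also have "\<dots> \<le> lnE (sepnum n R \<delta> x)"
      using sepnum_ge_card_power[OF \<rho> len A(1,3,4) \<open>1 \<le> l\<close>, of k] \<open>1 \<le> card A\<close> n(1)
      by (intro lnE_mono) auto
    finally have "ereal (1 / real n) * ereal (real k * \<alpha>) \<le> ereal (1 / real n) * lnE (sepnum n R \<delta> x)"
      by (intro ereal_mult_left_mono) auto
    moreover have "\<alpha> / (3 * real l) \<le> real k * \<alpha> / real n"
      by (rule le_loop_rate[OF \<open>0 \<le> \<alpha>\<close> n(2,3) \<open>1 \<le> l\<close> n(1)])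
    then have "ereal (\<alpha> / (3 * real l)) \<le> ereal (1 / real n) * ereal (real k * \<alpha>)" by simp
    ultimately show ?thesis by (rule order_trans[rotated])
  qed
  have "\<exists>\<^sub>F n in sequentially. ereal (\<alpha> / (3 * real l)) \<le> ereal (1 / real n) * lnE (sepnum n R \<delta> x)"
    unfolding frequently_sequentially
  proof
    fix N
    have "N \<le> L0 + 2 * l * (N + L0 + 1)"
      using mult_le_mono1[of 1 "2 * l" "N + L0 + 1"] \<open>1 \<le> l\<close> by simp
    with rate[OF refl, of "N + L0 + 1"]
    show "\<exists>n\<ge>N. ereal (\<alpha> / (3 * real l)) \<le> ereal (1 / real n) * lnE (sepnum n R \<delta> x)"
      by auto
  qed
  then show ?thesis unfolding sep_growth_def \<alpha>_def by (rule frequently_le_imp_le_Limsup)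
qed

lemma nat_mult_between:
  fixes m L :: nat
  assumes "1 \<le> m" "m \<le> L"
  obtains l where "1 \<le> l" "L \<le> m * l" "l * m \<le> 2 * L"
proof -
  have le: "L div m * m \<le> L" and less: "L < L div m * m + m"
    using div_mult_mod_eq[of L m] mod_less_divisor[of m L] \<open>1 \<le> m\<close> by linarith+
  have "L \<le> m * (L div m + 1)" using less by (simp add: algebra_simps)
  moreover have "(L div m + 1) * m = L div m * m + m" by simp
  then have "(L div m + 1) * m \<le> 2 * L" using le \<open>m \<le> L\<close> by linarith
  moreover have "1 \<le> L div m + 1" by simp
  ultimately show ?thesis using that by blast
qed

lemma exp_less_of_exp_double_less:
  fixes s a C :: real
  assumes "exp (2 * s) < a * C" "0 < C" "ln C \<le> s" "0 \<le> a"
  shows "exp s < a"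
proof -
  have "C \<le> exp s" using assms(2,3) ln_le_cancel_iff[of C "exp s"] by simp
  then have "a * C \<le> a * exp s" using assms(4) by (rule mult_left_mono)
  moreover have "exp (2 * s) = exp s * exp s" by (metis exp_add mult_2)
  ultimately have "exp s * exp s < a * exp s" using assms(1) by linarith
  then show ?thesis by (simp add: mult_less_cancel_right_pos)
qed

lemma large_dball_in_dcomp:
  fixes x :: "'a::metric_space"
  assumes bg: "bounded_geometry TYPE('a)" and "0 \<le> \<delta>" "1 \<le> L"
    and "ereal c < ereal (1 / real L) * lnE (Vol x \<delta> L)"
  obtains z where "z \<in> dcomp \<delta> x" "exp (c * real L) < real (card (dball \<delta> z L))"
proof -
  obtain v where v: "Vol x \<delta> L = ereal v" "1 \<le> v" using Vol_realE[OF bg \<open>0 \<le> \<delta>\<close>] by blast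
  then have "c < ln v / real L" using assms(4) by (simp add: lnE_ereal)
  then have "c * real L < ln v" using \<open>1 \<le> L\<close> by (simp add: field_simps)
  then have "exp (c * real L) < exp (ln v)" by simp
  then have "exp (c * real L) < v" using v(2) by simp
  then have "ereal (exp (c * real L)) < (SUP z\<in>dcomp \<delta> x. ereal (real (card (dball \<delta> z L))))"
    using v unfolding Vol_def by simp
  then obtain z where "z \<in> dcomp \<delta> x" "ereal (exp (c * real L)) < ereal (real (card (dball \<delta> z L)))"
    unfolding less_SUP_iff by blast
  then show ?thesis using that by simp
qed

text \<open>A maximal \<open>R\<close>-separated subset of the coarser ball covers it by \<open>R\<close>-balls of at most
  \<open>C \<le> exp (c L / 2)\<close> points each.\<close>

lemma large_separated_set_in_coarse_dball:
  fixes x :: "'a::metric_space"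
  assumes bg: "bounded_geometry TYPE('a)" and "0 < \<delta>" "1 \<le> m" "real m * \<delta> \<le> \<delta>'" "0 < R"
    and C: "\<And>y::'a. finite (cball y R)" "\<And>y::'a. card (cball y R) \<le> C"
    and L: "1 \<le> L" "m \<le> L" "ln (real C) \<le> c * real L / 2"
      "ereal c < ereal (1 / real L) * lnE (Vol x \<delta> L)"
  obtains z A l' where "z \<in> dcomp \<delta> x" "finite A" "A \<subseteq> dball \<delta>' z l'"
    "\<forall>a\<in>A. \<forall>b\<in>A. a \<noteq> b \<longrightarrow> R < dist a b" "exp (c * real L / 2) < real (card A)"
    "1 \<le> l'" "l' * m \<le> 2 * L"
proof -
  obtain z where z: "z \<in> dcomp \<delta> x" "exp (c * real L) < real (card (dball \<delta> z L))"
    using large_dball_in_dcomp[OF bg less_imp_le[OF \<open>0 < \<delta>\<close>] L(1,4)] by blast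
  obtain l' where "1 \<le> l'" "L \<le> m * l'" "l' * m \<le> 2 * L"
    using nat_mult_between[OF \<open>1 \<le> m\<close> \<open>m \<le> L\<close>] by blast
  have "0 \<le> real m * \<delta>" using \<open>0 < \<delta>\<close> by simp
  then have fin: "finite (dball \<delta>' z l')" using finite_dball[OF bg] assms(4) by auto
  obtain A where A: "A \<subseteq> dball \<delta>' z l'" "\<forall>a\<in>A. \<forall>b\<in>A. a \<noteq> b \<longrightarrow> R < dist a b"
    "card (dball \<delta>' z l') \<le> card A * C"
    using card_le_card_separated_subset[OF fin less_imp_le[OF \<open>0 < R\<close>] C] by blast
  have "card (dball \<delta> z L) \<le> card (dball \<delta>' z l')"
    using dball_subset_dball_coarser[OF assms(3) _ assms(4) \<open>L \<le> m * l'\<close>] \<open>0 < \<delta>\<close>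
    by (intro card_mono[OF fin]) auto
  then have "card (dball \<delta> z L) \<le> card A * C" using A(3) by (rule le_trans)
  then have "real (card (dball \<delta> z L)) \<le> real (card A) * real C"
    by (simp only: of_nat_mult[symmetric] of_nat_le_iff)
  moreover have "exp (2 * (c * real L / 2)) = exp (c * real L)" by simp
  ultimately have double: "exp (2 * (c * real L / 2)) < real (card A) * real C"
    using z(2) by linarith
  have "z \<in> cball z R" using \<open>0 < R\<close> by simp
  then have "0 < card (cball z R)" using C(1)[of z] card_gt_0_iff by blast
  then have "0 < real C" using C(2)[of z] by linarith
  from exp_less_of_exp_double_less[OF double this L(3) of_nat_0_le_iff]
  show ?thesis
    by (rule that[OF z(1) finite_subset[OF A(1) fin] A(1,2) _ \<open>1 \<le> l'\<close> \<open>l' * m \<le> 2 * L\<close>])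
qed

lemma sep_growth_ge:
  fixes x :: "'a::metric_space"
  assumes bg: "bounded_geometry TYPE('a)" and "0 < \<delta>" "0 < c"
    and Vol: "\<exists>\<^sub>F L in sequentially. ereal c < ereal (1 / real L) * lnE (Vol x \<delta> L)"
    and "1 \<le> m" "real m * \<delta> \<le> \<delta>'" "0 < R"
  shows "ereal (c * real m / 12) \<le> sep_growth x \<delta>' R"
proof -
  obtain C :: nat where C: "\<And>y::'a. finite (cball y R)" "\<And>y::'a. card (cball y R) \<le> C"
    using bounded_geometryE[OF bg \<open>0 < R\<close>] by blast
  obtain N :: nat where N: "2 * ln (real C) / c \<le> real N" using real_arch_simple by blast
  have "ln (real C) \<le> c * real L / 2" if "N \<le> L" for L
  proof -
    have "2 * ln (real C) / c \<le> real L" using N that by linarith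
    then show ?thesis using \<open>0 < c\<close> by (simp add: field_simps)
  qed
  then have "eventually (\<lambda>L. 1 \<le> L \<and> m \<le> L \<and> ln (real C) \<le> c * real L / 2) sequentially"
    unfolding eventually_sequentially by (intro exI[of _ "max N m + 1"]) auto
  from frequently_ex[OF frequently_eventually_conj[OF Vol this]] obtain L
    where "ereal c < ereal (1 / real L) * lnE (Vol x \<delta> L)"
      and "1 \<le> L" "m \<le> L" "ln (real C) \<le> c * real L / 2"
    by blast
  then obtain z A l' where zA: "z \<in> dcomp \<delta> x" "finite A" "A \<subseteq> dball \<delta>' z l'"
    "\<forall>a\<in>A. \<forall>b\<in>A. a \<noteq> b \<longrightarrow> R < dist a b" "exp (c * real L / 2) < real (card A)"
    "1 \<le> l'" "l' * m \<le> 2 * L"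
    using large_separated_set_in_coarse_dball[OF bg assms(2,5,6,7) C] by blast
  obtain \<rho> where \<rho>: "dpath \<delta> \<rho>" "hd \<rho> = x" "last \<rho> = z" using zA(1) unfolding dcomp_def by blast
  have "1 * \<delta> \<le> real m * \<delta>" using assms(2,5) by (intro mult_right_mono) auto
  then have "\<delta> \<le> \<delta>'" using assms(6) by simp
  with \<rho>(1) have \<rho>': "dpath \<delta>' \<rho>" by (rule dpath_mono)
  have "0 < real (card A)" using zA(5) exp_gt_zero[of "c * real L / 2"] by linarith
  then have "A \<noteq> {}" "c * real L / 2 < ln (real (card A))"
    using zA(5) ln_less_cancel_iff[of "exp (c * real L / 2)" "real (card A)"] by auto
  have "c * real m / 12 \<le> ln (real (card A)) / (3 * real l')"
  proof -
    have "real (l' * m) \<le> real (2 * L)" using zA(7) by (simp only: of_nat_le_iff)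
    then have "c * (real l' * real m) \<le> c * (2 * real L)" using \<open>0 < c\<close> by (intro mult_left_mono) auto
    moreover have "c * (real l' * real m) = 4 * (c * real m / 12 * (3 * real l'))" by simp
    moreover have "c * (2 * real L) = 4 * (c * real L / 2)" by simp
    ultimately have "c * real m / 12 * (3 * real l') \<le> ln (real (card A))"
      using \<open>c * real L / 2 < ln (real (card A))\<close> by linarith
    moreover have "0 < 3 * real l'" using zA(6) by simp
    ultimately show ?thesis using pos_le_divide_eq by blast
  qed
  then have "ereal (c * real m / 12) \<le> ereal (ln (real (card A)) / (3 * real l'))" by simp
  also have "\<dots> \<le> sep_growth x \<delta>' R"
    using sep_growth_ge_ln_card[OF \<rho>' \<rho>(2,3) zA(2) \<open>A \<noteq> {}\<close> zA(3,4,6)] .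
  finally show ?thesis .
qed

lemma Lim_sep_growth_ge:
  fixes x :: "'a::metric_space"
  assumes bg: "bounded_geometry TYPE('a)" and "0 < \<delta>" "0 < c"
    and Vol: "\<exists>\<^sub>F L in sequentially. ereal c < ereal (1 / real L) * lnE (Vol x \<delta> L)"
    and "1 \<le> m" "real m * \<delta> \<le> \<delta>'"
  shows "ereal (c * real m / 12) \<le> Lim at_top (\<lambda>R. sep_growth x \<delta>' R)"
proof -
  have "0 \<le> real m * \<delta>" using \<open>0 < \<delta>\<close> by simp
  then have "0 \<le> \<delta>'" using assms(6) by linarith
  then have lim: "((\<lambda>R. sep_growth x \<delta>' R) \<longlongrightarrow> (INF R. sep_growth x \<delta>' R)) at_top"
    by (intro antimono_tendsto_INF sep_growth_antimono)
  have "eventually (\<lambda>R. ereal (c * real m / 12) \<le> sep_growth x \<delta>' R) at_top"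
    using sep_growth_ge[OF bg assms(2-6)] by (intro eventually_at_top_linorderI[of 1]) auto
  then have "ereal (c * real m / 12) \<le> (INF R. sep_growth x \<delta>' R)"
    using lim by (intro tendsto_lowerbound) auto
  moreover have "Lim at_top (\<lambda>R. sep_growth x \<delta>' R) = (INF R. sep_growth x \<delta>' R)"
    using lim by (intro tendsto_Lim) auto
  ultimately show ?thesis by simp
qed

lemma coarse_entropy_eq_infinity:
  fixes x :: "'a::metric_space"
  assumes bg: "bounded_geometry TYPE('a)"
    and "\<exists>\<delta>>0. limsup (\<lambda>l. ereal (1 / real l) * lnE (Vol x \<delta> l)) > 0"
  shows "coarse_entropy x = \<infinity>"
proof -
  obtain \<delta> where "0 < \<delta>" and "0 < limsup (\<lambda>l. ereal (1 / real l) * lnE (Vol x \<delta> l))"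
    using assms(2) by blast
  then obtain c where "0 < ereal c" and c: "ereal c < limsup (\<lambda>l. ereal (1 / real l) * lnE (Vol x \<delta> l))"
    using ereal_dense2 by blast
  then have "0 < c" by simp
  note Lim_ge = Lim_sep_growth_ge[OF bg \<open>0 < \<delta>\<close> \<open>0 < c\<close> less_Limsup_imp_frequently[OF c]]
  have "((\<lambda>\<delta>'. Lim at_top (\<lambda>R. sep_growth x \<delta>' R)) \<longlongrightarrow> \<infinity>) at_top"
    unfolding tendsto_PInfty
  proof
    fix r :: real
    obtain m :: nat where "r < real m * (c / 12)" using ex_less_of_nat_mult[of "c / 12" r] \<open>0 < c\<close> by auto
    also have "\<dots> \<le> real (Suc m) * (c / 12)" using \<open>0 < c\<close> by (intro mult_right_mono) auto
    finally have "ereal r < ereal (c * real (Suc m) / 12)" by (simp add: ac_simps)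
    show "eventually (\<lambda>\<delta>'. ereal r < Lim at_top (\<lambda>R. sep_growth x \<delta>' R)) at_top"
    proof (rule eventually_at_top_linorderI)
      fix \<delta>' assume "real (Suc m) * \<delta> \<le> \<delta>'"
      then have "ereal (c * real (Suc m) / 12) \<le> Lim at_top (\<lambda>R. sep_growth x \<delta>' R)"
        by (intro Lim_ge) auto
      with \<open>ereal r < ereal (c * real (Suc m) / 12)\<close>
      show "ereal r < Lim at_top (\<lambda>R. sep_growth x \<delta>' R)" by (rule less_le_trans)
    qed
  qed
  then show ?thesis unfolding coarse_entropy_eq_Lim_sep_growth by (intro tendsto_Lim) auto
qed

theorem mainTheorem14:
  fixes x :: "'a::metric_space"
  assumes bg: "bounded_geometry TYPE('a)"
  shows "((\<forall>\<delta>>0. ((\<lambda>l. ereal (1 / real l) * lnE (Vol x \<delta> l)) \<longlonglongrightarrow> 0))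
            \<longrightarrow> coarse_entropy x = 0)
       \<and> ((\<exists>\<delta>>0. limsup (\<lambda>l. ereal (1 / real l) * lnE (Vol x \<delta> l)) > 0)
            \<longrightarrow> coarse_entropy x = \<infinity>)"
  using coarse_entropy_eq_0[OF bg] coarse_entropy_eq_infinity[OF bg] by blast

end
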